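(* Let $G$ be a finite simple graph with $n$ vertices $v_1,\dots,v_n$, and let $\bar{\bar{d}}(G)=\sqrt{\frac{d(v_1)^2+d(v_2)^2+\cdots+d(v_n)^2}{n}}$, where $d(v)$ denotes the degree of $v$. Then $$\varphi(G)\geq \frac{n}{n-\bar{\bar{d}}(G)}.$$ Moreover, equality holds if and only if $n\equiv 0 \pmod{\varphi(G)}$ and $G$ is a regular graph of degree $\frac{n(\varphi(G)-1)}{\varphi(G)}$.
   Context: All graphs are finite, undirected, without loops or multiple edges. For a graph $G$ with $n$ vertices, a set $V\subseteq V(G)$ is called a $\delta$-set in $G$ if $d(v)\leq n-|V|$ for every $v\in V$. The graph $G$ is called a generalized $r$-partite graph if there is a partition $V(G)=V_1\cup\dots\cup V_r$ into pairwise disjoint sets each of which is a $\delta$-set in $G$. The invariant $\varphi(G)$ is the smallest integer $r$ such that $G$ is a generalized $r$-partite graph. *)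

theory Defs
  imports Complex_Main
begin

text \<open>A finite simple graph is given by a finite vertex set V and a symmetric,
irreflexive adjacency relation E; only adjacencies inside V matter.\<close>

definition simple_graph :: "'a set \<Rightarrow> ('a \<Rightarrow> 'a \<Rightarrow> bool) \<Rightarrow> bool" where
  "simple_graph V E \<longleftrightarrow> finite V \<and> (\<forall>u v. E u v \<longrightarrow> E v u) \<and> (\<forall>v. \<not> E v v)"

definition degree :: "'a set \<Rightarrow> ('a \<Rightarrow> 'a \<Rightarrow> bool) \<Rightarrow> 'a \<Rightarrow> nat" where
  "degree V E v = card {u \<in> V. E v u}"

definition delta_set :: "'a set \<Rightarrow> ('a \<Rightarrow> 'a \<Rightarrow> bool) \<Rightarrow> 'a set \<Rightarrow> bool" where
  "delta_set V E W \<longleftrightarrow> W \<subseteq> V \<and> (\<forall>v\<in>W. int (degree V E v) \<le> int (card V) - int (card W))"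

definition gen_r_partite :: "'a set \<Rightarrow> ('a \<Rightarrow> 'a \<Rightarrow> bool) \<Rightarrow> nat \<Rightarrow> bool" where
  "gen_r_partite V E r \<longleftrightarrow>
     (\<exists>P :: nat \<Rightarrow> 'a set.
        (\<Union>i<r. P i) = V \<and>
        (\<forall>i<r. \<forall>j<r. i \<noteq> j \<longrightarrow> P i \<inter> P j = {}) \<and>
        (\<forall>i<r. delta_set V E (P i)))"

definition phi :: "'a set \<Rightarrow> ('a \<Rightarrow> 'a \<Rightarrow> bool) \<Rightarrow> nat" where
  "phi V E = (LEAST r. gen_r_partite V E r)"

definition quad_mean_degree :: "'a set \<Rightarrow> ('a \<Rightarrow> 'a \<Rightarrow> bool) \<Rightarrow> real" where
  "quad_mean_degree V E = sqrt ((\<Sum>v\<in>V. (real (degree V E v))\<^sup>2) / real (card V))"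

end

theory Submission
  imports Defs
begin

text \<open>Take an optimal partition into \<open>r = \<phi>(G)\<close> delta-sets of sizes \<open>a\<^sub>1, \<dots>, a\<^sub>r\<close>.
  Every vertex of the \<open>i\<close>-th part has degree at most \<open>n - a\<^sub>i\<close>, so
  \<open>\<Sum>\<^sub>v d(v)\<^sup>2 \<le> \<Sum>\<^sub>i a\<^sub>i (n - a\<^sub>i)\<^sup>2\<close>. On \<open>[0, n]\<close> the cubic \<open>a (n - a)\<^sup>2\<close> lies below its tangent at
  \<open>c = n / r\<close> (for \<open>r \<ge> 2\<close>, as then \<open>a \<le> n \<le> 2n - 2c\<close>), and the tangents sum to \<open>n (n - c)\<^sup>2\<close>
  because \<open>\<Sum> a\<^sub>i = n\<close>. Hence the quadratic mean degree is at most \<open>n - n / r\<close>, which rearranges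
  to the bound; equality forces all \<open>a\<^sub>i = n / r\<close> and all degrees to be \<open>n - n / r\<close>.\<close>

lemma sum_mono_eq_iff:
  fixes f g :: "'i \<Rightarrow> 'a::ordered_cancel_comm_monoid_add"
  assumes "finite A" "\<And>x. x \<in> A \<Longrightarrow> f x \<le> g x"
  shows "sum f A = sum g A \<longleftrightarrow> (\<forall>x\<in>A. f x = g x)"
proof
  assume "sum f A = sum g A"
  then show "\<forall>x\<in>A. f x = g x"
    using sum_strict_mono_ex1[OF assms(1)] assms(2) by (metis order.strict_iff_not order.antisym)
qed (rule sum.cong[OF refl], simp)

text \<open>The left-hand side is the gap between the cubic \<open>a (n - a)\<^sup>2\<close> and its tangent at \<open>c\<close>.\<close>
lemma cubic_tangent_gap:
  fixes a c n :: real
  shows "c * (n - c)\<^sup>2 + (n - c) * (n - 3 * c) * (a - c) - a * (n - a)\<^sup>2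
           = (a - c)\<^sup>2 * (2 * n - 2 * c - a)"
  by (simp add: algebra_simps power2_eq_square)

context
  fixes a :: "'i \<Rightarrow> real" and I :: "'i set" and n c :: real
  assumes finite: "finite I" and nonempty: "I \<noteq> {}"
    and nonneg: "\<And>i. i \<in> I \<Longrightarrow> 0 \<le> a i" and sum_eq: "sum a I = n"
  defines "c \<equiv> n / card I"
begin

private lemma card_pos: "real (card I) > 0"
  using finite nonempty by (simp add: card_gt_0_iff)

private lemma weight_le_total:
  assumes "i \<in> I"
  shows "a i \<le> n"
proof -
  have "a i \<le> sum a I" by (rule member_le_sum) (use assms nonneg finite in auto)
  then show ?thesis using sum_eq by simp
qed

private lemma double_c_le: "card I \<noteq> 1 \<Longrightarrow> 2 * c \<le> n"
proof -
  assume "card I \<noteq> 1"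
  moreover have "card I > 0" using finite nonempty by (simp add: card_gt_0_iff)
  ultimately have "real (card I) \<ge> 2" by linarith
  moreover have "0 \<le> n" using sum_nonneg[of I a] nonneg sum_eq by auto
  ultimately show "2 * c \<le> n" by (simp add: c_def field_simps mult_left_mono)
qed

private lemma tangent_gap_nonneg:
  assumes "i \<in> I"
  shows "0 \<le> (a i - c)\<^sup>2 * (2 * n - 2 * c - a i)"
proof (cases "card I = 1")
  case True
  then have "I = {i}" using assms finite by (metis card_1_singletonE singletonD)
  then show ?thesis using sum_eq by (simp add: c_def)
next
  case False
  then show ?thesis using double_c_le weight_le_total[OF assms] by simp
qed

private lemma sum_tangent_gap:
  "(\<Sum>i\<in>I. (a i - c)\<^sup>2 * (2 * n - 2 * c - a i)) = n * (n - c)\<^sup>2 - (\<Sum>i\<in>I. a i * (n - a i)\<^sup>2)"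
proof -
  have "card I * c = n" using card_pos by (simp add: c_def)
  have "(\<Sum>i\<in>I. c * (n - c)\<^sup>2 + (n - c) * (n - 3 * c) * (a i - c))
      = card I * (c * (n - c)\<^sup>2) + (n - c) * (n - 3 * c) * (sum a I - card I * c)"
    by (simp add: sum.distrib sum_subtractf flip: sum_distrib_left)
  also have "\<dots> = n * (n - c)\<^sup>2"
    using \<open>card I * c = n\<close> sum_eq by (simp flip: mult.assoc)
  finally show ?thesis
    by (simp flip: cubic_tangent_gap add: sum_subtractf)
qed

lemma sum_times_compl_sq_le: "(\<Sum>i\<in>I. a i * (n - a i)\<^sup>2) \<le> n * (n - n / card I)\<^sup>2"
proof -
  have "0 \<le> (\<Sum>i\<in>I. (a i - c)\<^sup>2 * (2 * n - 2 * c - a i))"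
    by (intro sum_nonneg tangent_gap_nonneg)
  then show ?thesis using sum_tangent_gap unfolding c_def by linarith
qed

lemma sum_times_compl_sq_eq_iff:
  "(\<Sum>i\<in>I. a i * (n - a i)\<^sup>2) = n * (n - n / card I)\<^sup>2 \<longleftrightarrow> (\<forall>i\<in>I. a i = n / card I)"
proof
  assume "(\<Sum>i\<in>I. a i * (n - a i)\<^sup>2) = n * (n - n / card I)\<^sup>2"
  then have gaps: "\<forall>i\<in>I. (a i - c)\<^sup>2 * (2 * n - 2 * c - a i) = 0"
    using sum_tangent_gap sum_nonneg_eq_0_iff[OF finite tangent_gap_nonneg] by (simp add: c_def)
  show "\<forall>i\<in>I. a i = n / card I"
  proof (rule ccontr)
    assume "\<not> (\<forall>i\<in>I. a i = n / card I)"
    then obtain j where j: "j \<in> I" "a j \<noteq> c" by (auto simp: c_def)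
    \<comment> \<open>Besides \<open>c\<close> the cubic meets its tangent only at \<open>2n - 2c\<close>; a part of that size
      carries the whole weight \<open>n\<close> and there are exactly two parts, leaving a part of weight \<open>0 \<noteq> c\<close>.\<close>
    then have aj: "a j = 2 * n - 2 * c" using gaps by auto
    have "card I \<noteq> 1"
    proof
      assume "card I = 1"
      then have "I = {j}" using j(1) finite by (metis card_1_singletonE singletonD)
      then show False using j sum_eq by (simp add: c_def)
    qed
    then have "I \<noteq> {j}" by auto
    then obtain k where k: "k \<in> I" "k \<noteq> j" using j(1) by blast
    have "2 * c \<le> n" using double_c_le \<open>card I \<noteq> 1\<close> .
    then have "a j = n" "2 * c = n" using aj weight_le_total[OF j(1)] by linarith+
    moreover have "a j + a k \<le> n"
      using sum_mono2[OF finite, of "{j, k}" a] j(1) k nonneg sum_eq by auto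
    ultimately have "a k = 0" using nonneg[OF k(1)] by linarith
    then have "c\<^sup>2 * n = 0" using gaps k(1) \<open>2 * c = n\<close> by auto
    then show False using j(2) \<open>a j = n\<close> \<open>2 * c = n\<close> by simp
  qed
next
  assume "\<forall>i\<in>I. a i = n / card I"
  then have "(\<Sum>i\<in>I. (a i - c)\<^sup>2 * (2 * n - 2 * c - a i)) = 0" by (simp add: c_def)
  then show "(\<Sum>i\<in>I. a i * (n - a i)\<^sup>2) = n * (n - n / card I)\<^sup>2"
    using sum_tangent_gap by (simp add: c_def)
qed

end

lemma degree_less_card:
  assumes "simple_graph V E" "v \<in> V"
  shows "degree V E v < card V"
proof -
  have "finite V" using assms(1) by (simp add: simple_graph_def)
  have "{u \<in> V. E v u} \<subseteq> V - {v}" using assms by (auto simp: simple_graph_def)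
  then have "degree V E v \<le> card (V - {v})"
    unfolding degree_def using \<open>finite V\<close> by (intro card_mono) auto
  also have "\<dots> < card V" using \<open>finite V\<close> assms(2) by (rule card_Diff1_less)
  finally show ?thesis .
qed

lemma gen_r_partite_card:
  assumes "simple_graph V E"
  shows "gen_r_partite V E (card V)"
proof -
  have "finite V" using assms by (simp add: simple_graph_def)
  then obtain h where h: "bij_betw h {..<card V} V"
    using ex_bij_betw_nat_finite lessThan_atLeast0 by metis
  have "(\<Union>i<card V. {h i}) = V" using h by (auto simp: bij_betw_def)
  moreover have "\<forall>i<card V. \<forall>j<card V. i \<noteq> j \<longrightarrow> {h i} \<inter> {h j} = {}"
    using h by (auto simp: bij_betw_def inj_on_def)
  moreover have "\<forall>i<card V. delta_set V E {h i}"
    using h degree_less_card[OF assms] by (fastforce simp: bij_betw_def delta_set_def)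
  ultimately show ?thesis unfolding gen_r_partite_def by blast
qed

lemma gen_r_partite_phi:
  assumes "simple_graph V E"
  shows "gen_r_partite V E (phi V E)"
  unfolding phi_def using gen_r_partite_card[OF assms] by (rule LeastI)

lemma phi_pos:
  assumes "simple_graph V E" "V \<noteq> {}"
  shows "phi V E > 0"
proof (rule ccontr)
  assume "\<not> phi V E > 0"
  then show False
    using gen_r_partite_phi[OF assms(1)] assms(2) by (simp add: gen_r_partite_def)
qed

context
  fixes V :: "'a set" and E :: "'a \<Rightarrow> 'a \<Rightarrow> bool" and r :: nat and P :: "nat \<Rightarrow> 'a set"
  assumes finite: "finite V"
    and cover: "(\<Union>i<r. P i) = V"
    and disjoint: "\<forall>i<r. \<forall>j<r. i \<noteq> j \<longrightarrow> P i \<inter> P j = {}"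
    and delta: "\<forall>i<r. delta_set V E (P i)"
begin

private lemma finite_part: "i < r \<Longrightarrow> finite (P i)"
  using delta finite by (meson delta_set_def finite_subset)

private lemma degree_le_part:
  assumes "i < r" "v \<in> P i"
  shows "real (degree V E v) \<le> real (card V) - real (card (P i))"
proof -
  have "int (degree V E v) \<le> int (card V) - int (card (P i))"
    using delta assms by (auto simp: delta_set_def)
  then show ?thesis by linarith
qed

private lemma sum_over_parts: "(\<Sum>v\<in>V. f v) = (\<Sum>i<r. \<Sum>v\<in>P i. f v)"
  unfolding cover[symmetric] by (rule sum.UNION_disjoint) (simp_all add: finite_part disjoint)

private lemma sum_card_parts: "(\<Sum>i<r. real (card (P i))) = real (card V)"
proof -
  have "card V = (\<Sum>i<r. card (P i))"
    unfolding cover[symmetric] by (rule card_UN_disjoint) (simp_all add: finite_part disjoint)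
  then show ?thesis by simp
qed

private lemma sum_degree_sq_part_le:
  assumes "i < r"
  shows "(\<Sum>v\<in>P i. (real (degree V E v))\<^sup>2) \<le> real (card (P i)) * (real (card V) - real (card (P i)))\<^sup>2"
proof -
  have "(\<Sum>v\<in>P i. (real (degree V E v))\<^sup>2) \<le> (\<Sum>v\<in>P i. (real (card V) - real (card (P i)))\<^sup>2)"
    using degree_le_part[OF assms] by (intro sum_mono power_mono) auto
  then show ?thesis by simp
qed

private lemma sum_degree_sq_le_parts:
  "(\<Sum>v\<in>V. (real (degree V E v))\<^sup>2) \<le> (\<Sum>i<r. real (card (P i)) * (real (card V) - real (card (P i)))\<^sup>2)"
  unfolding sum_over_parts using sum_degree_sq_part_le by (intro sum_mono) auto

private lemma degree_eq_of_sum_degree_sq_eq_parts: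
  assumes "(\<Sum>v\<in>V. (real (degree V E v))\<^sup>2) = (\<Sum>i<r. real (card (P i)) * (real (card V) - real (card (P i)))\<^sup>2)"
    and "i < r" "v \<in> P i"
  shows "real (degree V E v) = real (card V) - real (card (P i))"
proof -
  have "(\<Sum>j<r. \<Sum>v\<in>P j. (real (degree V E v))\<^sup>2)
      = (\<Sum>j<r. real (card (P j)) * (real (card V) - real (card (P j)))\<^sup>2)"
    using assms(1) by (simp only: sum_over_parts)
  then have part_eq: "(\<Sum>v\<in>P i. (real (degree V E v))\<^sup>2) = (\<Sum>v\<in>P i. (real (card V) - real (card (P i)))\<^sup>2)"
    using sum_mono_eq_iff[of "{..<r}" "\<lambda>j. \<Sum>v\<in>P j. (real (degree V E v))\<^sup>2"
        "\<lambda>j. real (card (P j)) * (real (card V) - real (card (P j)))\<^sup>2"]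
      sum_degree_sq_part_le assms(2) by simp
  have le: "(real (degree V E w))\<^sup>2 \<le> (real (card V) - real (card (P i)))\<^sup>2" if "w \<in> P i" for w
    using degree_le_part[OF assms(2) that] by (intro power_mono) auto
  have "(real (degree V E v))\<^sup>2 = (real (card V) - real (card (P i)))\<^sup>2"
    using part_eq assms(3) by (simp only: sum_mono_eq_iff[OF finite_part[OF assms(2)] le])
  then show ?thesis
    using degree_le_part[OF assms(2,3)] by (simp add: power2_eq_iff_nonneg)
qed

lemma sum_degree_sq_le_balanced:
  assumes "r > 0"
  shows "(\<Sum>v\<in>V. (real (degree V E v))\<^sup>2) \<le> real (card V) * (real (card V) - real (card V) / r)\<^sup>2"
proof -
  have "(\<Sum>i<r. real (card (P i)) * (real (card V) - real (card (P i)))\<^sup>2)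
      \<le> real (card V) * (real (card V) - real (card V) / card {..<r})\<^sup>2"
    by (rule sum_times_compl_sq_le) (use assms sum_card_parts in auto)
  then show ?thesis using sum_degree_sq_le_parts by simp
qed

lemma regular_of_sum_degree_sq_eq_balanced:
  assumes "r > 0"
    and eq: "(\<Sum>v\<in>V. (real (degree V E v))\<^sup>2) = real (card V) * (real (card V) - real (card V) / r)\<^sup>2"
  shows "card V mod r = 0" "\<forall>v\<in>V. real (degree V E v) = real (card V) - real (card V) / r"
proof -
  let ?parts = "\<Sum>i<r. real (card (P i)) * (real (card V) - real (card (P i)))\<^sup>2"
  have "?parts \<le> real (card V) * (real (card V) - real (card V) / card {..<r})\<^sup>2"
    by (rule sum_times_compl_sq_le) (use assms sum_card_parts in auto)
  then have parts_eq: "(\<Sum>v\<in>V. (real (degree V E v))\<^sup>2) = ?parts"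
    and "?parts = real (card V) * (real (card V) - real (card V) / card {..<r})\<^sup>2"
    using eq sum_degree_sq_le_parts by auto
  then have balanced: "\<forall>i<r. real (card (P i)) = real (card V) / r"
    using sum_times_compl_sq_eq_iff[of "{..<r}" "\<lambda>i. real (card (P i))" "real (card V)"]
      assms(1) sum_card_parts by auto
  then have "real (card V) = real (card (P 0) * r)" using assms(1) by simp
  then have "card V = card (P 0) * r" by (simp only: of_nat_eq_iff)
  then show "card V mod r = 0" by simp
  show "\<forall>v\<in>V. real (degree V E v) = real (card V) - real (card V) / r"
    using cover degree_eq_of_sum_degree_sq_eq_parts[OF parts_eq] balanced by fastforce
qed

end

lemma quad_mean_degree_le_iff:
  assumes "finite V" "V \<noteq> {}" "0 \<le> D"
  shows "quad_mean_degree V E \<le> D \<longleftrightarrow> (\<Sum>v\<in>V. (real (degree V E v))\<^sup>2) \<le> real (card V) * D\<^sup>2"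
    and "quad_mean_degree V E = D \<longleftrightarrow> (\<Sum>v\<in>V. (real (degree V E v))\<^sup>2) = real (card V) * D\<^sup>2"
proof -
  have "real (card V) > 0" using assms(1,2) by (simp add: card_gt_0_iff)
  moreover have "D = sqrt (D\<^sup>2)" using assms(3) by simp
  ultimately show "quad_mean_degree V E \<le> D \<longleftrightarrow> (\<Sum>v\<in>V. (real (degree V E v))\<^sup>2) \<le> real (card V) * D\<^sup>2"
    and "quad_mean_degree V E = D \<longleftrightarrow> (\<Sum>v\<in>V. (real (degree V E v))\<^sup>2) = real (card V) * D\<^sup>2"
    unfolding quad_mean_degree_def
    by (metis real_sqrt_le_iff pos_divide_le_eq mult.commute,
        metis real_sqrt_eq_iff nonzero_divide_eq_eq less_irrefl mult.commute)
qed

lemma divide_diff_le_of_le_diff_divide: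
  fixes n q r :: real
  assumes "0 < n" "0 < r" "q \<le> n - n / r"
  shows "n / (n - q) \<le> r" and "r = n / (n - q) \<longleftrightarrow> q = n - n / r"
proof -
  have "0 < n / r" using assms(1,2) by simp
  then have "0 < n - q" using assms(3) by linarith
  have "n \<le> r * (n - q)" using assms(2,3) by (simp add: field_simps)
  then show "n / (n - q) \<le> r" using \<open>0 < n - q\<close> by (simp add: pos_divide_le_eq)
  show "r = n / (n - q) \<longleftrightarrow> q = n - n / r"
    using \<open>0 < n - q\<close> assms(2) by (auto simp: field_simps)
qed

theorem theorem1p1:
  fixes V :: "'a set" and E :: "'a \<Rightarrow> 'a \<Rightarrow> bool"
  assumes "simple_graph V E" and "V \<noteq> {}"
  shows "real (phi V E) \<ge> real (card V) / (real (card V) - quad_mean_degree V E) \<and>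
         (real (phi V E) = real (card V) / (real (card V) - quad_mean_degree V E) \<longleftrightarrow>
           (card V mod phi V E = 0 \<and>
            (\<forall>v\<in>V. real (degree V E v) = real (card V) * (real (phi V E) - 1) / real (phi V E))))"
proof -
  define n r where "n = real (card V)" and "r = phi V E"
  define D where "D = n - n / r"
  have finite: "finite V" using assms(1) by (simp add: simple_graph_def)
  have "n > 0" using finite assms(2) by (simp add: n_def card_gt_0_iff)
  have "r > 0" using phi_pos[OF assms] by (simp add: r_def)
  then have "0 \<le> D" using \<open>n > 0\<close> by (simp add: D_def field_simps)
  have degree_D: "n * (real r - 1) / real r = D" using \<open>r > 0\<close> by (simp add: D_def field_simps)
  obtain P where partition: "(\<Union>i<r. P i) = V" "\<forall>i<r. \<forall>j<r. i \<noteq> j \<longrightarrow> P i \<inter> P j = {}"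
      "\<forall>i<r. delta_set V E (P i)"
    using gen_r_partite_phi[OF assms(1)] unfolding r_def gen_r_partite_def by blast
  note bound = sum_degree_sq_le_balanced[OF finite partition \<open>r > 0\<close>]
  note regular = regular_of_sum_degree_sq_eq_balanced[OF finite partition \<open>r > 0\<close>]
  have "quad_mean_degree V E \<le> D"
    using quad_mean_degree_le_iff(1)[OF finite assms(2) \<open>0 \<le> D\<close>] bound by (simp add: n_def D_def)
  moreover have "quad_mean_degree V E = D \<longleftrightarrow>
      card V mod r = 0 \<and> (\<forall>v\<in>V. real (degree V E v) = n * (real r - 1) / real r)"
    using quad_mean_degree_le_iff(2)[OF finite assms(2) \<open>0 \<le> D\<close>] regular degree_D
    by (auto simp: n_def D_def)
  ultimately show ?thesis
    using divide_diff_le_of_le_diff_divide[of n "real r"] \<open>n > 0\<close> \<open>r > 0\<close>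
    unfolding n_def r_def D_def by auto
qed

end
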